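(* Let $L$ be a Lie algebra over a field $K$, and let $\varphi: L \to L$ be a linear map. Then $\varphi$ is a Hom-Lie structure on $L$ if and only if the bilinear map $F_\varphi: L \times L \to L$ defined by $$F_\varphi(x,y) = [\varphi(x),y] + [x,\varphi(y)]$$ satisfies $$[F_\varphi(x,y),z] + [F_\varphi(z,x),y] + [F_\varphi(y,z),x] = 0$$ for all $x,y,z \in L$.
   Context: A Hom-Lie structure on a Lie algebra $L$ is a linear map $\varphi: L \to L$ satisfying the Hom-Jacobi equation $[[x,y],\varphi(z)] + [[z,x],\varphi(y)] + [[y,z],\varphi(x)] = 0$ for all $x,y,z \in L$. *)

theory Defs
  imports Main "HOL.Vector_Spaces"
begin

definition lie_algebra :: "('k::field \<Rightarrow> 'v::ab_group_add \<Rightarrow> 'v) \<Rightarrow> ('v \<Rightarrow> 'v \<Rightarrow> 'v) \<Rightarrow> bool" where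
  "lie_algebra sc br \<longleftrightarrow>
     vector_space sc \<and>
     (\<forall>x. Vector_Spaces.linear sc sc (\<lambda>y. br x y)) \<and>
     (\<forall>y. Vector_Spaces.linear sc sc (\<lambda>x. br x y)) \<and>
     (\<forall>x. br x x = 0) \<and>
     (\<forall>x y z. br x (br y z) + br y (br z x) + br z (br x y) = 0)"

definition hom_lie_structure :: "('v::ab_group_add \<Rightarrow> 'v \<Rightarrow> 'v) \<Rightarrow> ('v \<Rightarrow> 'v) \<Rightarrow> bool" where
  "hom_lie_structure br \<phi> \<longleftrightarrow>
     (\<forall>x y z. br (br x y) (\<phi> z) + br (br z x) (\<phi> y) + br (br y z) (\<phi> x) = 0)"

definition F_phi :: "('v \<Rightarrow> 'v \<Rightarrow> 'v::plus) \<Rightarrow> ('v \<Rightarrow> 'v) \<Rightarrow> 'v \<Rightarrow> 'v \<Rightarrow> 'v" where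
  "F_phi br \<phi> x y = br (\<phi> x) y + br x (\<phi> y)"

end

theory Submission
  imports Defs
begin

text \<open>Expanding \<open>F\<^sub>\<phi>\<close>, the two terms containing \<open>\<phi> x\<close> are
\<open>[[\<phi> x, y], z] + [[z, \<phi> x], y]\<close>, which by the Jacobi identity equals
\<open>-[[y, z], \<phi> x]\<close>; likewise for \<open>\<phi> y\<close> and \<open>\<phi> z\<close>. Hence the cyclic sum of
\<open>[F\<^sub>\<phi>(x, y), z]\<close> is minus the Hom-Jacobi expression, for every map \<open>\<phi>\<close>,
linear or not.\<close>

lemma lie_algebra_add_left:
  assumes "lie_algebra sc br"
  shows "br (a + b) c = br a c + br b c"
  using assms unfolding lie_algebra_def Vector_Spaces.linear_def module_hom_iff by blast

lemma lie_algebra_add_right: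
  assumes "lie_algebra sc br"
  shows "br a (b + c) = br a b + br a c"
  using assms unfolding lie_algebra_def Vector_Spaces.linear_def module_hom_iff by blast

lemma lie_algebra_anticomm:
  assumes "lie_algebra sc br"
  shows "br x y = - br y x"
proof -
  have alt: "br v v = 0" for v
    using assms unfolding lie_algebra_def by blast
  have "0 = br (x + y) (x + y)"
    using alt by simp
  also have "\<dots> = br x x + br x y + (br y x + br y y)"
    by (simp add: lie_algebra_add_left[OF assms] lie_algebra_add_right[OF assms])
  finally show ?thesis
    using alt by (simp add: eq_neg_iff_add_eq_0 add.commute)
qed

lemma lie_algebra_jacobi_left:
  assumes "lie_algebra sc br"
  shows "br (br a b) c + br (br b c) a + br (br c a) b = 0"
proof -
  have "br (br a b) c + br (br b c) a + br (br c a) b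
      = - (br c (br a b) + br a (br b c) + br b (br c a))"
    using lie_algebra_anticomm[OF assms, of "br a b" c] lie_algebra_anticomm[OF assms, of "br b c" a]
      lie_algebra_anticomm[OF assms, of "br c a" b]
    by simp
  also have "\<dots> = 0"
    using assms unfolding lie_algebra_def by (simp add: algebra_simps)
  finally show ?thesis .
qed

lemma F_phi_cyclic_sum_eq_neg_hom_jacobi:
  fixes br :: "'v::ab_group_add \<Rightarrow> 'v \<Rightarrow> 'v"
  assumes add_left: "\<And>a b c. br (a + b) c = br a c + br b c"
    and jacobi: "\<And>a b c. br (br a b) c + br (br b c) a + br (br c a) b = 0"
  shows "br (F_phi br \<phi> x y) z + br (F_phi br \<phi> z x) y + br (F_phi br \<phi> y z) x
    = - (br (br x y) (\<phi> z) + br (br z x) (\<phi> y) + br (br y z) (\<phi> x))"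
proof -
  have pair: "br (br (\<phi> u) v) w + br (br w (\<phi> u)) v = - br (br v w) (\<phi> u)" for u v w
    using jacobi[of "\<phi> u" v w] by (simp add: algebra_simps eq_neg_iff_add_eq_0)
  have "br (F_phi br \<phi> x y) z + br (F_phi br \<phi> z x) y + br (F_phi br \<phi> y z) x
      = (br (br (\<phi> x) y) z + br (br z (\<phi> x)) y) + (br (br (\<phi> y) z) x + br (br x (\<phi> y)) z)
        + (br (br (\<phi> z) x) y + br (br y (\<phi> z)) x)"
    unfolding F_phi_def add_left by (simp add: algebra_simps)
  also have "\<dots> = - (br (br x y) (\<phi> z) + br (br z x) (\<phi> y) + br (br y z) (\<phi> x))"
    unfolding pair by (simp add: algebra_simps)
  finally show ?thesis .
qed

theorem lemma1p1:
  fixes sc :: "'k::field \<Rightarrow> 'v::ab_group_add \<Rightarrow> 'v"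
    and br :: "'v \<Rightarrow> 'v \<Rightarrow> 'v"
    and \<phi> :: "'v \<Rightarrow> 'v"
  assumes "lie_algebra sc br"
    and "Vector_Spaces.linear sc sc \<phi>"
  shows "hom_lie_structure br \<phi> \<longleftrightarrow>
    (\<forall>x y z. br (F_phi br \<phi> x y) z + br (F_phi br \<phi> z x) y + br (F_phi br \<phi> y z) x = 0)"
  unfolding hom_lie_structure_def
    F_phi_cyclic_sum_eq_neg_hom_jacobi[OF lie_algebra_add_left[OF assms(1)] lie_algebra_jacobi_left[OF assms(1)]]
    neg_equal_0_iff_equal
  by (rule refl)

end
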